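(* Fix $\delta\in[0,1)$ and $V_{\sf P}\ge0$. Then $$\lim_{p\to0}g(\delta,\rho_1,c)=1,\qquad \lim_{p\to0}g(\delta,\rho_2,c)=\frac{1-\delta}{1-\delta\rho_2},$$ where $\rho_1$ and $c$ depend on $p$ as defined below and $\rho_2$ does not depend on $p$.
   Context: For $p\in(0,1)$ and $V_{\sf P}\ge0$ define $\rho_1=\frac{e^{(1-p)/p}}{1+e^{V_{\sf P}}+e^{(1-p)/p}}$, $\rho_2=\frac{e^{-1}}{1+e^{V_{\sf P}}+e^{-1}}$, and $c=\frac{\ln((1-\rho_2)/(1-\rho_1))}{\ln(\rho_1/\rho_2)+\ln((1-\rho_2)/(1-\rho_1))}$. For $\rho,x\in[0,1]$, let $X_1(\rho,x),X_2(\rho,x),\dots$ be i.i.d. random variables with $X_k=1-x$ with probability $\rho$ and $X_k=-x$ with probability $1-\rho$; let $S_n(\rho,x)=\sum_{k=1}^nX_k(\rho,x)$ and $N(\rho,x)=\inf\{n\ge1:S_n(\rho,x)<0\}$. Define $g(\delta,\rho,x)=\mathbb E\left[1-\delta^{N(\rho,x)}\right]$ (with the convention $\delta^{\infty}=0$). *)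

theory Defs
  imports "HOL-Probability.Probability"
begin

definition walk_step :: "real \<Rightarrow> bool \<Rightarrow> real" where
  "walk_step x b = (if b then 1 - x else - x)"

definition walk_S :: "real \<Rightarrow> nat \<Rightarrow> bool stream \<Rightarrow> real" where
  "walk_S x n \<omega> = (\<Sum>k<n. walk_step x (\<omega> !! k))"

definition walk_N :: "real \<Rightarrow> bool stream \<Rightarrow> enat" where
  "walk_N x \<omega> = (if \<exists>n\<ge>1. walk_S x n \<omega> < 0
                 then enat (LEAST n. 1 \<le> n \<and> walk_S x n \<omega> < 0) else \<infinity>)"

definition enat_pow :: "real \<Rightarrow> enat \<Rightarrow> real" where
  "enat_pow d m = (case m of enat n \<Rightarrow> d ^ n | \<infinity> \<Rightarrow> 0)"

definition coin_space :: "real \<Rightarrow> bool stream measure" where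
  "coin_space \<rho> = stream_space (measure_pmf (bernoulli_pmf \<rho>))"

definition g :: "real \<Rightarrow> real \<Rightarrow> real \<Rightarrow> real" where
  "g \<delta> \<rho> x = (\<integral>\<omega>. 1 - enat_pow \<delta> (walk_N x \<omega>) \<partial>coin_space \<rho>)"

definition rho1 :: "real \<Rightarrow> real \<Rightarrow> real" where
  "rho1 VP p = exp ((1 - p) / p) / (1 + exp VP + exp ((1 - p) / p))"

definition rho2 :: "real \<Rightarrow> real" where
  "rho2 VP = exp (-1) / (1 + exp VP + exp (-1))"

definition cc :: "real \<Rightarrow> real \<Rightarrow> real" where
  "cc VP p = ln ((1 - rho2 VP) / (1 - rho1 VP p)) /
     (ln (rho1 VP p / rho2 VP) + ln ((1 - rho2 VP) / (1 - rho1 VP p)))"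

end

theory Submission
  imports Defs "HOL-Real_Asymp.Real_Asymp"
begin

text \<open>While the coins show heads the walk climbs by \<open>1 - x\<close> per step, so \<open>N > K\<close> on the event of
  \<open>K\<close> initial heads; and a first tail at a step \<open>n\<close> with \<open>n (1 - x) < x\<close> pushes the walk below
  zero at once, so \<open>N = n + 1\<close>. Hence, for \<open>K\<close> of order \<open>x / (1 - x)\<close>, \<open>E[\<delta>^N]\<close> equals the
  geometric sum \<open>\<Sum>n<K. \<delta>^(n+1) \<rho>^n (1 - \<rho>)\<close> up to an error of at most \<open>\<delta>^K\<close>, and
  \<open>|g(\<delta>, \<rho>, x) - (1 - \<delta>) / (1 - \<delta> \<rho>)| \<le> \<delta>^K\<close>. As \<open>p \<rightarrow> 0\<close>, \<open>\<rho>\<^sub>1 \<rightarrow> 1\<close> and \<open>c \<rightarrow> 1\<close> from below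
  (the numerator \<open>ln ((1 - \<rho>\<^sub>2) / (1 - \<rho>\<^sub>1))\<close> of \<open>c\<close> tends to infinity while \<open>ln (\<rho>\<^sub>1 / \<rho>\<^sub>2)\<close>
  stays bounded), so \<open>K \<rightarrow> \<infinity>\<close> and both limits are the value \<open>(1 - \<delta>) / (1 - \<delta> \<rho>)\<close> at
  \<open>\<rho> = 1\<close> and \<open>\<rho> = \<rho>\<^sub>2\<close>.\<close>

lemma prob_space_coin_space: "prob_space (coin_space r)"
  unfolding coin_space_def
  by (rule prob_space.prob_space_stream_space) (rule prob_space_measure_pmf)

lemma space_coin_space [simp]: "space (coin_space r) = UNIV"
  unfolding coin_space_def by (simp add: space_stream_space)

lemma sets_coin_space_Collect: "Measurable.pred (coin_space r) P \<Longrightarrow> {\<omega>. P \<omega>} \<in> sets (coin_space r)"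
  by (simp add: pred_def)

lemma sets_coin_space [measurable_cong]:
  "sets (coin_space r) = sets (stream_space (count_space UNIV))"
  unfolding coin_space_def by (rule sets_stream_space_cong) simp

lemma measurable_walk_N [measurable]: "walk_N x \<in> measurable (coin_space r) (count_space UNIV)"
  unfolding walk_N_def walk_S_def walk_step_def by measurable

lemma prob_coin_space_heads_prefix:
  assumes "0 \<le> r" "r \<le> 1" and [measurable]: "Measurable.pred (coin_space r) P"
  shows "\<P>(\<omega> in coin_space r. (\<forall>k<n. \<omega> !! k) \<and> P (sdrop n \<omega>)) = r ^ n * \<P>(\<omega> in coin_space r. P \<omega>)"
proof (induction n)
  case (Suc n)
  have "ennreal \<P>(\<omega> in coin_space r. (\<forall>k<Suc n. \<omega> !! k) \<and> P (sdrop (Suc n) \<omega>))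
      = (\<integral>\<^sup>+b. \<P>(\<omega> in coin_space r. (\<forall>k<Suc n. (b ## \<omega>) !! k) \<and> P (sdrop n \<omega>)) \<partial>bernoulli_pmf r)"
    unfolding coin_space_def by (subst prob_space.prob_stream_space[OF prob_space_measure_pmf]) simp_all
  also have "\<dots> = (\<integral>\<^sup>+b. (if b then r ^ n * \<P>(\<omega> in coin_space r. P \<omega>) else 0) \<partial>bernoulli_pmf r)"
    using Suc.IH by (intro nn_integral_cong) (simp add: All_less_Suc2)
  also have "\<dots> = ennreal (r ^ Suc n * \<P>(\<omega> in coin_space r. P \<omega>))"
    using assms by (simp add: mult_ac ennreal_mult)
  finally show ?case
    using assms by simp
qed simp

lemma prob_coin_space_first_tail:
  assumes "0 \<le> r" "r \<le> 1"
  shows "\<P>(\<omega> in coin_space r. (\<forall>k<n. \<omega> !! k) \<and> \<not> \<omega> !! n) = r ^ n * (1 - r)"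
proof -
  interpret coins: prob_space "coin_space r"
    by (rule prob_space_coin_space)
  have "ennreal \<P>(\<omega> in coin_space r. \<not> shd \<omega>)
      = (\<integral>\<^sup>+b. \<P>(\<omega> in coin_space r. \<not> b) \<partial>bernoulli_pmf r)"
    unfolding coin_space_def by (subst prob_space.prob_stream_space[OF prob_space_measure_pmf]) simp_all
  also have "\<dots> = ennreal (1 - r)"
    using assms coins.prob_space by simp
  finally have "\<P>(\<omega> in coin_space r. \<not> shd \<omega>) = 1 - r"
    using assms by simp
  then show ?thesis
    using prob_coin_space_heads_prefix[OF assms, of "\<lambda>\<omega>. \<not> shd \<omega>" n] by simp
qed

lemma walk_S_heads_prefix:
  assumes "\<forall>k<m. \<omega> !! k"
  shows "walk_S x m \<omega> = real m * (1 - x)"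
  using assms unfolding walk_S_def walk_step_def by simp

lemma walk_N_le:
  assumes "1 \<le> n" "walk_S x n \<omega> < 0"
  shows "walk_N x \<omega> \<le> enat n"
  using assms unfolding walk_N_def by (auto intro: Least_le)

lemma walk_N_enatD:
  assumes "walk_N x \<omega> = enat m"
  shows "1 \<le> m" "walk_S x m \<omega> < 0"
proof -
  have "\<exists>n\<ge>1. walk_S x n \<omega> < 0" and m: "m = (LEAST n. 1 \<le> n \<and> walk_S x n \<omega> < 0)"
    using assms unfolding walk_N_def by (auto split: if_splits)
  then have "1 \<le> m \<and> walk_S x m \<omega> < 0"
    by (metis (mono_tags, lifting) LeastI)
  then show "1 \<le> m" "walk_S x m \<omega> < 0" by auto
qed

lemma walk_N_gt_heads_prefix:
  assumes "x < 1" "\<forall>k<K. \<omega> !! k"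
  shows "enat K < walk_N x \<omega>"
proof (cases "walk_N x \<omega>")
  case (enat m)
  have "\<not> m \<le> K"
  proof
    assume "m \<le> K"
    then have "walk_S x m \<omega> = real m * (1 - x)"
      using assms(2) by (intro walk_S_heads_prefix) auto
    then show False
      using walk_N_enatD(2)[OF enat] assms(1) by (simp add: mult_less_0_iff)
  qed
  then show ?thesis using enat by simp
qed simp

lemma walk_N_first_tail:
  assumes "x < 1" "\<forall>k<n. \<omega> !! k" "\<not> \<omega> !! n" "real n * (1 - x) < x"
  shows "walk_N x \<omega> = enat (Suc n)"
proof -
  have "walk_S x (Suc n) \<omega> < 0"
    using walk_S_heads_prefix[OF assms(2), of x] assms(3,4) by (simp add: walk_S_def walk_step_def)
  then have "walk_N x \<omega> \<le> enat (Suc n)"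
    by (intro walk_N_le) auto
  moreover have "enat n < walk_N x \<omega>"
    using assms(1,2) by (rule walk_N_gt_heads_prefix)
  ultimately show ?thesis
    by (cases "walk_N x \<omega>") auto
qed

lemma enat_pow_nonneg: "0 \<le> d \<Longrightarrow> 0 \<le> enat_pow d m"
  unfolding enat_pow_def by (cases m) auto

lemma enat_pow_le_power:
  assumes "0 \<le> d" "d \<le> 1" "enat K \<le> m"
  shows "enat_pow d m \<le> d ^ K"
  using assms unfolding enat_pow_def by (cases m) (auto intro: power_decreasing)

lemma enat_pow_le_one: "0 \<le> d \<Longrightarrow> d \<le> 1 \<Longrightarrow> enat_pow d m \<le> 1"
  unfolding enat_pow_def by (cases m) (auto intro: power_le_one)

lemma integrable_enat_pow_walk_N:
  assumes "0 \<le> d" "d \<le> 1"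
  shows "integrable (coin_space r) (\<lambda>\<omega>. enat_pow d (walk_N x \<omega>))"
proof -
  interpret coins: prob_space "coin_space r"
    by (rule prob_space_coin_space)
  show ?thesis
    using enat_pow_nonneg enat_pow_le_one assms
    by (intro coins.integrable_const_bound[where B = 1]) auto
qed

lemma g_eq_one_minus_expectation:
  assumes "0 \<le> d" "d \<le> 1"
  shows "g d r x = 1 - (\<integral>\<omega>. enat_pow d (walk_N x \<omega>) \<partial>coin_space r)"
proof -
  interpret coins: prob_space "coin_space r"
    by (rule prob_space_coin_space)
  show ?thesis
    unfolding g_def using integrable_enat_pow_walk_N[OF assms] coins.prob_space
    by (simp add: Bochner_Integration.integral_diff)
qed

lemma enat_pow_walk_N_split:
  assumes "x < 1" "\<forall>n<K. real n * (1 - x) < x"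
  shows "enat_pow d (walk_N x \<omega>) =
    (\<Sum>n<K. d ^ Suc n * indicator {\<omega>. (\<forall>k<n. \<omega> !! k) \<and> \<not> \<omega> !! n} \<omega>) +
    indicator {\<omega>. \<forall>k<K. \<omega> !! k} \<omega> * enat_pow d (walk_N x \<omega>)"
  using assms(2)
proof (induction K)
  case (Suc K)
  have "indicator {\<omega>. \<forall>k<K. \<omega> !! k} \<omega> * enat_pow d (walk_N x \<omega>) =
      d ^ Suc K * indicator {\<omega>. (\<forall>k<K. \<omega> !! k) \<and> \<not> \<omega> !! K} \<omega> +
      indicator {\<omega>. \<forall>k<Suc K. \<omega> !! k} \<omega> * enat_pow d (walk_N x \<omega>)"
    using walk_N_first_tail[OF assms(1), of K \<omega>] Suc.prems
    by (auto simp: indicator_def All_less_Suc enat_pow_def)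
  with Suc show ?case by simp
qed simp

lemma expectation_enat_pow_walk_N_bounds:
  assumes d: "0 \<le> d" "d \<le> 1" and r: "0 \<le> r" "r \<le> 1"
    and x: "x < 1" and K: "\<forall>n<K. real n * (1 - x) < x"
  shows "(\<Sum>n<K. d ^ Suc n * r ^ n * (1 - r)) \<le> (\<integral>\<omega>. enat_pow d (walk_N x \<omega>) \<partial>coin_space r)"
    and "(\<integral>\<omega>. enat_pow d (walk_N x \<omega>) \<partial>coin_space r) \<le> (\<Sum>n<K. d ^ Suc n * r ^ n * (1 - r)) + d ^ K"
proof -
  interpret coins: prob_space "coin_space r"
    by (rule prob_space_coin_space)
  let ?S = "\<Sum>n<K. d ^ Suc n * r ^ n * (1 - r)"
  let ?E = "\<integral>\<omega>. enat_pow d (walk_N x \<omega>) \<partial>coin_space r"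
  define h where "h \<omega> = enat_pow d (walk_N x \<omega>)" for \<omega>
  define tail where "tail n = {\<omega>. (\<forall>k<n. \<omega> !! k) \<and> \<not> \<omega> !! n}" for n
  define heads where "heads = {\<omega>. \<forall>k<K. \<omega> !! k}"
  define R where "R = (\<integral>\<omega>. indicator heads \<omega> * h \<omega> \<partial>coin_space r)"
  have h_bounds: "0 \<le> h \<omega>" "h \<omega> \<le> 1" for \<omega>
    using enat_pow_nonneg[OF d(1)] enat_pow_le_one[OF d] unfolding h_def by auto
  have [measurable]: "h \<in> borel_measurable (coin_space r)"
    unfolding h_def by measurable
  have [measurable]: "heads \<in> sets (coin_space r)"
    unfolding heads_def by (intro sets_coin_space_Collect) measurable
  have [measurable]: "tail n \<in> sets (coin_space r)" for n
    unfolding tail_def by (intro sets_coin_space_Collect) measurable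
  have integrable_tail: "integrable (coin_space r) (indicat_real (tail n))" for n
    by (intro integrable_real_indicator) (auto simp: coins.emeasure_eq_measure)
  have integrable_sum_tail: "integrable (coin_space r) (\<lambda>\<omega>. \<Sum>n<K. d ^ Suc n * indicator (tail n) \<omega>)"
    using integrable_tail by (intro Bochner_Integration.integrable_sum integrable_mult_right)
  have integrable_heads: "integrable (coin_space r) (\<lambda>\<omega>. indicator heads \<omega> * h \<omega>)"
    using h_bounds by (intro coins.integrable_const_bound[where B = 1]) (auto simp: indicator_def)
  have "?E = (\<integral>\<omega>. (\<Sum>n<K. d ^ Suc n * indicator (tail n) \<omega>) + indicator heads \<omega> * h \<omega> \<partial>coin_space r)"
    unfolding h_def tail_def heads_def
    by (intro Bochner_Integration.integral_cong refl enat_pow_walk_N_split[OF x K])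
  also have "\<dots> = (\<Sum>n<K. d ^ Suc n * measure (coin_space r) (tail n)) + R"
    unfolding R_def
    by (subst Bochner_Integration.integral_add[OF integrable_sum_tail integrable_heads])
      (simp add: Bochner_Integration.integral_sum integrable_tail del: sum_mult_indicator)
  finally have E: "?E = ?S + R"
    using prob_coin_space_first_tail[OF r] by (simp add: tail_def mult.assoc)
  have "0 \<le> R"
    unfolding R_def using h_bounds by (intro integral_nonneg_AE) auto
  moreover have "R \<le> (\<integral>\<omega>. d ^ K \<partial>coin_space r)"
    unfolding R_def h_def heads_def using walk_N_gt_heads_prefix[OF x] enat_pow_le_power[OF d]
    by (intro integral_mono integrable_heads[unfolded h_def heads_def])
      (auto simp: indicator_def order.strict_implies_order d(1))
  ultimately show "?S \<le> ?E" "?E \<le> ?S + d ^ K"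
    using E coins.prob_space by auto
qed

lemma abs_g_minus_limit_le:
  assumes d: "0 \<le> d" "d < 1" and r: "0 \<le> r" "r \<le> 1"
    and x: "x < 1" and K: "\<forall>n<K. real n * (1 - x) < x"
  shows "\<bar>g d r x - (1 - d) / (1 - d * r)\<bar> \<le> d ^ K"
proof -
  have d1: "d \<le> 1"
    using d(2) by simp
  have dr: "d * r < 1"
    using d r by (metis le_less_trans mult_left_le)
  define c where "c = d * (1 - r) / (1 - d * r)"
  have limit_eq: "(1 - d) / (1 - d * r) = 1 - c"
    using dr by (simp add: c_def field_simps)
  have "(\<Sum>n<K. d ^ Suc n * r ^ n * (1 - r)) = d * (1 - r) * (\<Sum>n<K. (d * r) ^ n)"
    by (simp add: sum_distrib_left power_mult_distrib mult_ac)
  also have "\<dots> = c * (1 - (d * r) ^ K)"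
    using dr by (simp add: sum_gp_strict c_def)
  also have "\<dots> = c - c * (d * r) ^ K"
    by (simp add: right_diff_distrib)
  finally have S: "(\<Sum>n<K. d ^ Suc n * r ^ n * (1 - r)) = c - c * (d * r) ^ K" .
  have "d * r \<le> d"
    using d r by (simp add: mult_left_le)
  then have c: "0 \<le> c" "c \<le> 1"
    using d r dr by (auto simp: c_def field_simps)
  have "(d * r) ^ K \<le> d ^ K"
    using d r by (intro power_mono) (auto simp: mult_left_le)
  then have "c * (d * r) ^ K \<le> 1 * d ^ K"
    using c d r by (intro mult_mono) auto
  moreover have "0 \<le> c * (d * r) ^ K"
    using c d r by simp
  ultimately show ?thesis
    using expectation_enat_pow_walk_N_bounds[OF d(1) d1 r x K] g_eq_one_minus_expectation[OF d(1) d1]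
      S limit_eq
    by (simp add: abs_le_iff)
qed

lemma filterlim_nat_floor_odds_at_left_1: "filterlim (\<lambda>x::real. nat \<lfloor>x / (1 - x)\<rfloor>) at_top (at_left 1)"
proof -
  have "filterlim (\<lambda>x::real. x / (1 - x)) at_top (at_left 1)"
    by real_asymp
  then show ?thesis
    by (intro filterlim_compose[OF filterlim_nat_sequentially]
        filterlim_compose[OF filterlim_floor_sequentially])
qed

lemma g_tendsto:
  assumes \<delta>: "0 \<le> \<delta>" "\<delta> < 1"
    and r: "(r \<longlongrightarrow> r0) F" "\<forall>\<^sub>F t in F. 0 \<le> r t \<and> r t \<le> 1"
    and x: "filterlim x (at_left 1) F"
  shows "((\<lambda>t. g \<delta> (r t) (x t)) \<longlongrightarrow> (1 - \<delta>) / (1 - \<delta> * r0)) F"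
proof (cases "F = bot")
  case False
  define K where "K t = nat \<lfloor>x t / (1 - x t)\<rfloor>" for t
  have "r0 \<le> 1"
    using r False by (intro tendsto_upperbound[OF r(1)]) (auto elim: eventually_mono)
  then have "\<delta> * r0 < 1"
    using \<delta> by (smt (verit) mult_left_le)
  then have limit: "((\<lambda>t. (1 - \<delta>) / (1 - \<delta> * r t)) \<longlongrightarrow> (1 - \<delta>) / (1 - \<delta> * r0)) F"
    by (intro tendsto_intros r(1)) auto
  have "filterlim K at_top F"
    unfolding K_def by (rule filterlim_compose[OF filterlim_nat_floor_odds_at_left_1 x])
  then have decay: "((\<lambda>t. \<delta> ^ K t) \<longlongrightarrow> 0) F"
    using \<delta> by (intro filterlim_compose[OF LIMSEQ_power_zero]) auto
  have "\<forall>\<^sub>F t in F. norm (g \<delta> (r t) (x t) - (1 - \<delta>) / (1 - \<delta> * r t)) \<le> \<delta> ^ K t"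
    using r(2) conjunct1[OF x[unfolded filterlim_at]]
  proof eventually_elim
    case (elim t)
    have "real n * (1 - x t) < x t" if "n < K t" for n
    proof -
      have "real n < x t / (1 - x t)"
        using that unfolding K_def by linarith
      then show ?thesis
        using elim by (simp add: field_simps)
    qed
    then show ?case
      using elim \<delta> abs_g_minus_limit_le by simp
  qed
  then have "((\<lambda>t. g \<delta> (r t) (x t) - (1 - \<delta>) / (1 - \<delta> * r t)) \<longlongrightarrow> 0) F"
    using decay by (rule Lim_null_comparison)
  with limit show ?thesis
    by (rule Lim_transform)
qed simp

lemma rho1_pos: "0 < rho1 VP p" and rho1_less_1: "rho1 VP p < 1"
  unfolding rho1_def by (simp_all add: add_pos_pos)

lemma rho2_pos: "0 < rho2 VP" and rho2_less_1: "rho2 VP < 1"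
  unfolding rho2_def by (simp_all add: add_pos_pos)

lemma filterlim_rho1_at_left_1: "filterlim (rho1 VP) (at_left 1) (at_right 0)"
proof (rule tendsto_imp_filterlim_at_left)
  show "(rho1 VP \<longlongrightarrow> 1) (at_right 0)"
    unfolding rho1_def by real_asymp
qed (simp add: rho1_less_1)

lemma filterlim_divide_add_at_left_1:
  fixes a b :: "'a \<Rightarrow> real"
  assumes a: "filterlim a at_top F" and b: "(b \<longlongrightarrow> \<beta>) F" "0 < \<beta>"
  shows "filterlim (\<lambda>t. a t / (b t + a t)) (at_left 1) F"
proof (rule tendsto_imp_filterlim_at_left)
  have eventually_pos: "\<forall>\<^sub>F t in F. 0 < a t \<and> 0 < b t"
    using filterlim_at_top_dense[THEN iffD1, OF a, rule_format, of 0] order_tendstoD(1)[OF b]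
    by eventually_elim simp
  then show "\<forall>\<^sub>F t in F. a t / (b t + a t) < 1"
    by eventually_elim simp
  have "((\<lambda>t. inverse (b t / a t + 1)) \<longlongrightarrow> inverse (0 + 1)) F"
    using a b by (intro tendsto_intros tendsto_divide_0[OF b(1)] filterlim_at_top_imp_at_infinity) auto
  moreover have "\<forall>\<^sub>F t in F. inverse (b t / a t + 1) = a t / (b t + a t)"
    using eventually_pos by eventually_elim (simp add: field_simps)
  ultimately show "((\<lambda>t. a t / (b t + a t)) \<longlongrightarrow> 1) F"
    by (simp add: tendsto_cong)
qed

lemma filterlim_cc_at_left_1: "filterlim (cc VP) (at_left 1) (at_right 0)"
proof -
  have "((\<lambda>p. 1 - rho1 VP p) \<longlongrightarrow> 0) (at_right 0)"
    using filterlim_rho1_at_left_1[unfolded filterlim_at] by (intro tendsto_eq_intros) auto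
  then have "filterlim (\<lambda>p. inverse (1 - rho1 VP p)) at_top (at_right 0)"
    by (rule filterlim_inverse_at_top) (simp add: rho1_less_1)
  then have "filterlim (\<lambda>p. (1 - rho2 VP) * inverse (1 - rho1 VP p)) at_top (at_right 0)"
    by (intro filterlim_tendsto_pos_mult_at_top[OF tendsto_const]) (simp add: rho2_less_1)
  then have "filterlim (\<lambda>p. ln ((1 - rho2 VP) / (1 - rho1 VP p))) at_top (at_right 0)"
    unfolding divide_inverse by (rule filterlim_compose[OF ln_at_top])
  moreover have "((\<lambda>p. ln (rho1 VP p / rho2 VP)) \<longlongrightarrow> ln (1 / rho2 VP)) (at_right 0)"
    using filterlim_rho1_at_left_1[unfolded filterlim_at] rho2_pos[of VP]
    by (intro tendsto_intros) auto
  moreover have "0 < ln (1 / rho2 VP)"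
    using rho2_pos rho2_less_1 by simp
  ultimately show ?thesis
    unfolding cc_def by (rule filterlim_divide_add_at_left_1)
qed

theorem lemma2:
  fixes \<delta> VP :: real
  assumes "0 \<le> \<delta>" "\<delta> < 1" "0 \<le> VP"
  shows "((\<lambda>p. g \<delta> (rho1 VP p) (cc VP p)) \<longlongrightarrow> 1) (at_right 0) \<and>
         ((\<lambda>p. g \<delta> (rho2 VP) (cc VP p)) \<longlongrightarrow> (1 - \<delta>) / (1 - \<delta> * rho2 VP)) (at_right 0)"
proof
  have "((\<lambda>p. g \<delta> (rho1 VP p) (cc VP p)) \<longlongrightarrow> (1 - \<delta>) / (1 - \<delta> * 1)) (at_right 0)"
    using assms(1,2) filterlim_rho1_at_left_1[unfolded filterlim_at] filterlim_cc_at_left_1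
    by (intro g_tendsto) (auto intro: always_eventually less_imp_le rho1_pos rho1_less_1)
  then show "((\<lambda>p. g \<delta> (rho1 VP p) (cc VP p)) \<longlongrightarrow> 1) (at_right 0)"
    using assms(2) by simp
  show "((\<lambda>p. g \<delta> (rho2 VP) (cc VP p)) \<longlongrightarrow> (1 - \<delta>) / (1 - \<delta> * rho2 VP)) (at_right 0)"
    using assms(1,2) filterlim_cc_at_left_1 rho2_pos[of VP] rho2_less_1[of VP]
    by (intro g_tendsto) auto
qed

end
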